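(* Let $\mathcal{H}$ be a reproducing kernel Hilbert space of functions on a set $X$, with multiplier algebra $\mathcal{M}(\mathcal{H})$. Let $(\phi_n)_{n\ge1}$ be a sequence of elements of the closed unit ball of $\mathcal{M}(\mathcal{H})$. Put $\Phi_0=1$ and $\Phi_n:=\phi_1\phi_2\cdots\phi_n$ for $n\ge1$. Assume there is a multiplier $\Phi\in\mathcal{M}(\mathcal{H})$ such that $\lim_{n\to\infty}\Phi_n(x)=\Phi(x)$ for every $x\in X$. Then for every $f\in\mathcal{H}$, \[ f=\Phi\, M_\Phi^{*}f+\sum_{n=1}^{\infty}\Phi_{n-1}\cdot Q_{\phi_n}M_{\Phi_{n-1}}^{*}f, \] where the series converges in the norm of $\mathcal{H}$.
   Context: For a multiplier $\phi\in\mathcal{M}(\mathcal{H})$, $M_\phi:\mathcal{H}\to\mathcal{H}$ denotes the multiplication operator $M_\phi g=\phi g$, and $M_\phi^*$ its Hilbert space adjoint. The multiplier norm of $\phi$ is the operator norm of $M_\phi$; the closed unit ball of $\mathcal{M}(\mathcal{H})$ consists of the multipliers with $\|M_\phi\|\le 1$. For $\phi\in\mathcal{M}(\mathcal{H})$ define $P_\phi:=M_\phi M_\phi^*$ and $Q_\phi:=I-M_\phi M_\phi^*$, where $I$ is the identity on $\mathcal{H}$. *)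

theory Defs
  imports Complex_Main
begin

text \<open>A reproducing kernel Hilbert space of complex-valued functions on the
  type 'x, given as a set H of functions together with an inner product ip
  (linear in the first argument, conjugate-linear in the second).\<close>

definition hnorm :: "(('x \<Rightarrow> complex) \<Rightarrow> ('x \<Rightarrow> complex) \<Rightarrow> complex) \<Rightarrow> ('x \<Rightarrow> complex) \<Rightarrow> real" where
  "hnorm ip f = sqrt (Re (ip f f))"

definition rkhs :: "('x \<Rightarrow> complex) set \<Rightarrow> (('x \<Rightarrow> complex) \<Rightarrow> ('x \<Rightarrow> complex) \<Rightarrow> complex) \<Rightarrow> bool" where
  "rkhs H ip \<longleftrightarrow>
     (\<lambda>x. 0) \<in> H \<and>
     (\<forall>f\<in>H. \<forall>g\<in>H. (\<lambda>x. f x + g x) \<in> H) \<and>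
     (\<forall>a. \<forall>f\<in>H. (\<lambda>x. a * f x) \<in> H) \<and>
     (\<forall>a. \<forall>f\<in>H. \<forall>g\<in>H. \<forall>h\<in>H. ip (\<lambda>x. a * f x + g x) h = a * ip f h + ip g h) \<and>
     (\<forall>f\<in>H. \<forall>g\<in>H. ip f g = cnj (ip g f)) \<and>
     (\<forall>f\<in>H. Im (ip f f) = 0 \<and> Re (ip f f) \<ge> 0) \<and>
     (\<forall>f\<in>H. ip f f = 0 \<longrightarrow> f = (\<lambda>x. 0)) \<and>
     (\<forall>u. (\<forall>n. u n \<in> H) \<and>
          (\<forall>e>0. \<exists>N. \<forall>m\<ge>N. \<forall>n\<ge>N. hnorm ip (\<lambda>x. u m x - u n x) < e)
          \<longrightarrow> (\<exists>g\<in>H. (\<lambda>n. hnorm ip (\<lambda>x. u n x - g x)) \<longlonglongrightarrow> 0)) \<and>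
     (\<forall>y. \<exists>k\<in>H. \<forall>f\<in>H. f y = ip f k)"

definition mult :: "('x \<Rightarrow> complex) \<Rightarrow> ('x \<Rightarrow> complex) \<Rightarrow> ('x \<Rightarrow> complex)" where
  "mult \<phi> f = (\<lambda>x. \<phi> x * f x)"

text \<open>Multipliers: functions phi with phi H contained in H and M_phi bounded
  (boundedness is automatic by the closed graph theorem).\<close>
definition multiplier :: "('x \<Rightarrow> complex) set \<Rightarrow> (('x \<Rightarrow> complex) \<Rightarrow> ('x \<Rightarrow> complex) \<Rightarrow> complex) \<Rightarrow> ('x \<Rightarrow> complex) \<Rightarrow> bool" where
  "multiplier H ip \<phi> \<longleftrightarrow> (\<forall>f\<in>H. mult \<phi> f \<in> H) \<and>
     (\<exists>C. \<forall>f\<in>H. hnorm ip (mult \<phi> f) \<le> C * hnorm ip f)"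

definition mult_ball :: "('x \<Rightarrow> complex) set \<Rightarrow> (('x \<Rightarrow> complex) \<Rightarrow> ('x \<Rightarrow> complex) \<Rightarrow> complex) \<Rightarrow> ('x \<Rightarrow> complex) \<Rightarrow> bool" where
  "mult_ball H ip \<phi> \<longleftrightarrow> multiplier H ip \<phi> \<and> (\<forall>f\<in>H. hnorm ip (mult \<phi> f) \<le> hnorm ip f)"

definition mult_adj :: "('x \<Rightarrow> complex) set \<Rightarrow> (('x \<Rightarrow> complex) \<Rightarrow> ('x \<Rightarrow> complex) \<Rightarrow> complex) \<Rightarrow> ('x \<Rightarrow> complex) \<Rightarrow> ('x \<Rightarrow> complex) \<Rightarrow> ('x \<Rightarrow> complex)" where
  "mult_adj H ip \<phi> h = (THE g. g \<in> H \<and> (\<forall>f\<in>H. ip (mult \<phi> f) h = ip f g))"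

definition Qop :: "('x \<Rightarrow> complex) set \<Rightarrow> (('x \<Rightarrow> complex) \<Rightarrow> ('x \<Rightarrow> complex) \<Rightarrow> complex) \<Rightarrow> ('x \<Rightarrow> complex) \<Rightarrow> ('x \<Rightarrow> complex) \<Rightarrow> ('x \<Rightarrow> complex)" where
  "Qop H ip \<phi> h = (\<lambda>x. h x - mult \<phi> (mult_adj H ip \<phi> h) x)"

definition partial_prod :: "(nat \<Rightarrow> 'x \<Rightarrow> complex) \<Rightarrow> nat \<Rightarrow> 'x \<Rightarrow> complex" where
  "partial_prod \<phi> n = (\<lambda>x. \<Prod>i\<in>{1..n}. \<phi> i x)"

end

theory Submission
  imports Defs
begin

(* With g_n = M_{Phi_n}^* f and R_n = P_{Phi_n} f = Phi_n g_n, the n-th term of the series is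
   R_{n-1} - R_n, so the partial sums are f - R_N. Writing Phi_n = Phi_m b with the contractive
   multiplier b = phi_{m+1} ... phi_n, one gets R_m - R_n = Phi_m Q_b g_m and hence
   ||R_m - R_n||^2 <= ||g_m||^2 - ||g_n||^2; the norms ||g_n|| decrease, so (R_n) is Cauchy.
   Its limit is identified pointwise: contractive multipliers converging pointwise converge
   weakly, because the reproducing kernels are total, so g_n -> M_Phi^* f pointwise and
   R_n -> Phi M_Phi^* f. *)


lemma quadratic_nonneg_imp_le:
  fixes a b c :: real
  assumes nonneg: "\<And>s. 0 \<le> a - 2*s*b + s^2*b*c" and "0 \<le> a" "0 \<le> b" "0 \<le> c"
  shows "b \<le> a * c"
proof (cases "b = 0")
  case False
  hence b: "b > 0" using assms by simp
  show ?thesis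
  proof (cases "c = 0")
    case True
    have "0 \<le> a - 2*((a+1)/(2*b))*b + ((a+1)/(2*b))^2*b*c" by (rule nonneg)
    also have "\<dots> = -1" using True b by (simp add: field_simps)
    finally show ?thesis by simp
  next
    case False
    hence c: "c > 0" using assms by simp
    have "0 \<le> a - 2*(1/c)*b + (1/c)^2*b*c" by (rule nonneg)
    also have "\<dots> = a - b/c" using c by (simp add: field_simps power2_eq_square)
    finally show ?thesis using c by (simp add: field_simps)
  qed
qed (use assms in simp)

lemma mult_mult: "mult a (mult b f) = mult (\<lambda>x. a x * b x) f"
  by (simp add: mult_def mult.assoc)

lemma mult_one: "mult (\<lambda>x. 1) f = f"
  by (simp add: mult_def)

lemma mult_lincomb: "mult \<psi> (\<lambda>x. a * u x + v x) = (\<lambda>x. a * mult \<psi> u x + mult \<psi> v x)"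
  by (simp add: mult_def algebra_simps)

section \<open>Hilbert space geometry\<close>

locale rkhs_space =
  fixes H :: "('x \<Rightarrow> complex) set"
    and ip :: "('x \<Rightarrow> complex) \<Rightarrow> ('x \<Rightarrow> complex) \<Rightarrow> complex"
  assumes rkhs: "rkhs H ip"
begin

definition hCauchy :: "(nat \<Rightarrow> 'x \<Rightarrow> complex) \<Rightarrow> bool" where
  "hCauchy u \<longleftrightarrow> (\<forall>e>0. \<exists>N. \<forall>m\<ge>N. \<forall>n\<ge>N. hnorm ip (\<lambda>x. u m x - u n x) < e)"

lemma zero_mem: "(\<lambda>x. 0) \<in> H"
  using rkhs unfolding rkhs_def by blast

lemma add_mem: "u \<in> H \<Longrightarrow> v \<in> H \<Longrightarrow> (\<lambda>x. u x + v x) \<in> H"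
  using rkhs unfolding rkhs_def by blast

lemma scale_mem: "u \<in> H \<Longrightarrow> (\<lambda>x. a * u x) \<in> H"
  using rkhs unfolding rkhs_def by blast

lemma lincomb_mem: "u \<in> H \<Longrightarrow> v \<in> H \<Longrightarrow> (\<lambda>x. a * u x + v x) \<in> H"
  using add_mem[OF scale_mem[of u a]] by auto

lemma diff_mem: "u \<in> H \<Longrightarrow> v \<in> H \<Longrightarrow> (\<lambda>x. u x - v x) \<in> H"
  using lincomb_mem[of v u "-1"] by simp

lemma inner_lincomb_left:
  "u \<in> H \<Longrightarrow> v \<in> H \<Longrightarrow> w \<in> H \<Longrightarrow> ip (\<lambda>x. a * u x + v x) w = a * ip u w + ip v w"
  using rkhs unfolding rkhs_def by blast

lemma inner_commute: "u \<in> H \<Longrightarrow> v \<in> H \<Longrightarrow> ip u v = cnj (ip v u)"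
  using rkhs unfolding rkhs_def by blast

lemma inner_self_Im: "u \<in> H \<Longrightarrow> Im (ip u u) = 0"
  using rkhs unfolding rkhs_def by blast

lemma inner_self_Re_nonneg: "u \<in> H \<Longrightarrow> 0 \<le> Re (ip u u)"
  using rkhs unfolding rkhs_def by blast

lemma inner_self_eq_zero_imp: "u \<in> H \<Longrightarrow> ip u u = 0 \<Longrightarrow> u = (\<lambda>x. 0)"
  using rkhs unfolding rkhs_def by blast

lemma hCauchy_converges:
  assumes "\<And>n. u n \<in> H" and "hCauchy u"
  shows "\<exists>g\<in>H. (\<lambda>n. hnorm ip (\<lambda>x. u n x - g x)) \<longlonglongrightarrow> 0"
  using rkhs assms unfolding rkhs_def hCauchy_def by blast

lemma reproducing_kernel: "\<exists>k\<in>H. \<forall>f\<in>H. f y = ip f k"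
  using rkhs unfolding rkhs_def by blast

lemma inner_zero_left: "w \<in> H \<Longrightarrow> ip (\<lambda>x. 0) w = 0"
  using inner_lincomb_left[OF zero_mem zero_mem, of w 1] by simp

lemma inner_scale_left: "u \<in> H \<Longrightarrow> w \<in> H \<Longrightarrow> ip (\<lambda>x. a * u x) w = a * ip u w"
  using inner_lincomb_left[OF _ zero_mem, of u w a] inner_zero_left by simp

lemma inner_diff_left:
  "u \<in> H \<Longrightarrow> v \<in> H \<Longrightarrow> w \<in> H \<Longrightarrow> ip (\<lambda>x. u x - v x) w = ip u w - ip v w"
  using inner_lincomb_left[of v u w "-1"] by simp

lemma inner_lincomb_right:
  "u \<in> H \<Longrightarrow> v \<in> H \<Longrightarrow> w \<in> H \<Longrightarrow> ip w (\<lambda>x. a * u x + v x) = cnj a * ip w u + ip w v"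
  by (simp add: inner_commute[of w] inner_commute[of w u] inner_commute[of w v]
      lincomb_mem inner_lincomb_left)

lemma inner_zero_right: "w \<in> H \<Longrightarrow> ip w (\<lambda>x. 0) = 0"
  by (simp add: inner_commute[of w] zero_mem inner_zero_left)

lemma inner_scale_right: "u \<in> H \<Longrightarrow> w \<in> H \<Longrightarrow> ip w (\<lambda>x. a * u x) = cnj a * ip w u"
  by (simp add: inner_commute[of w] inner_commute[of w u] scale_mem inner_scale_left)

lemma inner_diff_right:
  "u \<in> H \<Longrightarrow> v \<in> H \<Longrightarrow> w \<in> H \<Longrightarrow> ip w (\<lambda>x. u x - v x) = ip w u - ip w v"
  by (simp add: inner_commute[of w] inner_commute[of w u] inner_commute[of w v]
      diff_mem inner_diff_left)

lemma hnorm_nonneg: "u \<in> H \<Longrightarrow> 0 \<le> hnorm ip u"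
  using inner_self_Re_nonneg by (simp add: hnorm_def)

lemma hnorm_square: "u \<in> H \<Longrightarrow> (hnorm ip u)^2 = Re (ip u u)"
  using inner_self_Re_nonneg[of u] by (simp add: hnorm_def)

lemma inner_self: "u \<in> H \<Longrightarrow> ip u u = of_real ((hnorm ip u)^2)"
  using inner_self_Im[of u] hnorm_square[of u] by (simp add: complex_eq_iff)

lemma hnorm_diff_scale_square:
  assumes u: "u \<in> H" and w: "w \<in> H"
  shows "(hnorm ip (\<lambda>x. u x - t * w x))^2
    = (hnorm ip u)^2 - 2 * Re (cnj t * ip u w) + (cmod t)^2 * (hnorm ip w)^2"
proof -
  define z where "z = (\<lambda>x. (-t) * w x + u x)"
  have z: "z \<in> H" unfolding z_def using lincomb_mem[OF w u] .
  have "ip z z = (-t) * ip w z + ip u z"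
    unfolding z_def by (rule inner_lincomb_left[OF w u z[unfolded z_def]])
  also have "ip w z = cnj (-t) * ip w w + ip w u"
    unfolding z_def using inner_lincomb_right[OF w u w] .
  also have "ip u z = cnj (-t) * ip u w + ip u u"
    unfolding z_def using inner_lincomb_right[OF w u u] .
  finally have "ip z z = t * cnj t * ip w w - t * ip w u - cnj t * ip u w + ip u u"
    by (simp add: algebra_simps)
  moreover have "t * cnj t = of_real ((cmod t)^2)"
    by (rule complex_norm_square[symmetric])
  moreover have "Re (t * ip w u) = Re (cnj t * ip u w)"
    using inner_commute[OF w u] by simp
  moreover have "(\<lambda>x. u x - t * w x) = z"
    unfolding z_def by auto
  ultimately show ?thesis
    using hnorm_square[OF z] inner_self[OF w] inner_self[OF u] by simp
qed

lemma hnorm_diff_square: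
  "u \<in> H \<Longrightarrow> w \<in> H \<Longrightarrow>
    (hnorm ip (\<lambda>x. u x - w x))^2 = (hnorm ip u)^2 - 2 * Re (ip u w) + (hnorm ip w)^2"
  using hnorm_diff_scale_square[of u w 1] by simp

lemma hnorm_add_square:
  "u \<in> H \<Longrightarrow> w \<in> H \<Longrightarrow>
    (hnorm ip (\<lambda>x. u x + w x))^2 = (hnorm ip u)^2 + 2 * Re (ip u w) + (hnorm ip w)^2"
  using hnorm_diff_scale_square[of u w "-1"] by simp

lemma hnorm_diff_real_scale_inner_square:
  assumes u: "u \<in> H" and w: "w \<in> H"
  shows "(hnorm ip (\<lambda>x. u x - (of_real s * ip u w) * w x))^2
    = (hnorm ip u)^2 - 2*s*(cmod (ip u w))^2 + s^2*(cmod (ip u w))^2*(hnorm ip w)^2"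
proof -
  have "Re (cnj (of_real s * ip u w) * ip u w) = s * (cmod (ip u w))^2"
    using cmod_power2[of "ip u w"] by (simp add: power2_eq_square algebra_simps)
  moreover have "(cmod (of_real s * ip u w))^2 = s^2 * (cmod (ip u w))^2"
    by (simp add: norm_mult power_mult_distrib)
  ultimately show ?thesis
    using hnorm_diff_scale_square[OF u w, of "of_real s * ip u w"] by simp
qed

lemma cmod_inner_le:
  assumes u: "u \<in> H" and w: "w \<in> H"
  shows "cmod (ip u w) \<le> hnorm ip u * hnorm ip w"
proof -
  have "(cmod (ip u w))^2 \<le> (hnorm ip u)^2 * (hnorm ip w)^2"
    by (rule quadratic_nonneg_imp_le)
      (use hnorm_diff_real_scale_inner_square[OF u w] in \<open>simp_all, metis zero_le_power2\<close>)
  thus ?thesis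
    using hnorm_nonneg[OF u] hnorm_nonneg[OF w]
    by (metis mult_nonneg_nonneg power2_le_imp_le power_mult_distrib)
qed

lemma hnorm_scale:
  assumes u: "u \<in> H"
  shows "hnorm ip (\<lambda>x. a * u x) = cmod a * hnorm ip u"
proof -
  have "ip (\<lambda>x. a * u x) (\<lambda>x. a * u x) = of_real ((cmod a)^2) * ip u u"
    using u complex_norm_square[of a]
    by (simp add: inner_scale_left inner_scale_right scale_mem mult.assoc)
  thus ?thesis
    by (simp add: hnorm_def real_sqrt_mult)
qed

lemma hnorm_diff_commute:
  "u \<in> H \<Longrightarrow> v \<in> H \<Longrightarrow> hnorm ip (\<lambda>x. u x - v x) = hnorm ip (\<lambda>x. v x - u x)"
  using hnorm_scale[of "\<lambda>x. v x - u x" "-1"] diff_mem[of v u] by simp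

lemma hnorm_triangle:
  assumes u: "u \<in> H" and w: "w \<in> H"
  shows "hnorm ip (\<lambda>x. u x + w x) \<le> hnorm ip u + hnorm ip w"
proof -
  have "(hnorm ip (\<lambda>x. u x + w x))^2 \<le> (hnorm ip u + hnorm ip w)^2"
    unfolding hnorm_add_square[OF u w] power2_sum
    using cmod_inner_le[OF u w] complex_Re_le_cmod[of "ip u w"] by simp
  thus ?thesis
    using hnorm_nonneg[OF u] hnorm_nonneg[OF w] by (meson add_nonneg_nonneg power2_le_imp_le)
qed

lemma hnorm_triangle_diff:
  assumes "u \<in> H" "v \<in> H" "w \<in> H"
  shows "hnorm ip (\<lambda>x. u x - w x) \<le> hnorm ip (\<lambda>x. u x - v x) + hnorm ip (\<lambda>x. v x - w x)"
  using hnorm_triangle[OF diff_mem[of u v] diff_mem[of v w]] assms by simp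

lemma parallelogram_law:
  "u \<in> H \<Longrightarrow> w \<in> H \<Longrightarrow> (hnorm ip (\<lambda>x. u x - w x))^2 + (hnorm ip (\<lambda>x. u x + w x))^2
    = 2 * (hnorm ip u)^2 + 2 * (hnorm ip w)^2"
  by (simp add: hnorm_diff_square hnorm_add_square)

lemma hnorm_tendsto_imp_pointwise:
  assumes u: "\<And>n. u n \<in> H" and g: "g \<in> H"
    and lim: "(\<lambda>n. hnorm ip (\<lambda>x. u n x - g x)) \<longlonglongrightarrow> 0"
  shows "(\<lambda>n. u n y) \<longlonglongrightarrow> g y"
proof -
  obtain k where k: "k \<in> H" "\<forall>f\<in>H. f y = ip f k"
    using reproducing_kernel by blast
  have "cmod (u n y - g y) \<le> hnorm ip (\<lambda>x. u n x - g x) * hnorm ip k" for n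
    using cmod_inner_le[OF diff_mem[OF u g] k(1)] k(2) diff_mem[OF u g] by simp
  hence "(\<lambda>n. u n y - g y) \<longlonglongrightarrow> 0"
    using hnorm_nonneg[OF diff_mem[OF u g]]
    by (intro tendsto_0_le[OF lim, of _ "hnorm ip k"] always_eventually) simp
  thus ?thesis by (rule LIM_zero_cancel)
qed

lemma hCauchyI_square_le:
  assumes le: "\<And>N m n. N \<le> m \<Longrightarrow> N \<le> n \<Longrightarrow> (hnorm ip (\<lambda>x. u m x - u n x))^2 \<le> \<delta> N"
    and "\<delta> \<longlonglongrightarrow> 0"
  shows "hCauchy u"
  unfolding hCauchy_def
proof (intro allI impI)
  fix e :: real assume "e > 0"
  then obtain N where N: "\<delta> N < e^2"
    using order_tendstoD(2)[OF \<open>\<delta> \<longlonglongrightarrow> 0\<close>, of "e^2"] by (auto simp: eventually_sequentially)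
  have "hnorm ip (\<lambda>x. u m x - u n x) < e" if "N \<le> m" "N \<le> n" for m n
    using le[OF that] N \<open>e > 0\<close> by (simp add: power2_less_imp_less)
  thus "\<exists>N. \<forall>m\<ge>N. \<forall>n\<ge>N. hnorm ip (\<lambda>x. u m x - u n x) < e" by blast
qed

lemma hCauchy_of_square_le_diff:
  assumes u: "\<And>n. u n \<in> H" and a: "\<And>n. 0 \<le> a n"
    and le: "\<And>m n. m \<le> n \<Longrightarrow> (hnorm ip (\<lambda>x. u m x - u n x))^2 \<le> a m - a n"
  shows "hCauchy u"
proof -
  have "a (Suc n) \<le> a n" for n
    using le[of n "Suc n"] zero_le_power2[of "hnorm ip (\<lambda>x. u n x - u (Suc n) x)"] by linarith
  hence dec: "decseq a" by (rule decseq_SucI)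
  then obtain L where L: "a \<longlonglongrightarrow> L"
    using decseq_convergent[of a 0] a by metis
  show ?thesis
  proof (rule hCauchyI_square_le)
    show "(hnorm ip (\<lambda>x. u m x - u n x))^2 \<le> a N - L" if "N \<le> m" "N \<le> n" for N m n
    proof (cases "m \<le> n")
      case True
      thus ?thesis
        using le[OF True] decseq_ge[OF dec L, of n] decseqD[OF dec that(1)] by linarith
    next
      case False
      thus ?thesis
        using le[of n m] decseq_ge[OF dec L, of m] decseqD[OF dec that(2)]
          hnorm_diff_commute[OF u u, of m n]
        by simp
    qed
    show "(\<lambda>N. a N - L) \<longlonglongrightarrow> 0"
      using L by (simp add: LIM_zero)
  qed
qed

section \<open>Orthogonal projection and Riesz representation\<close>

definition closed_subspace :: "('x \<Rightarrow> complex) set \<Rightarrow> bool" where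
  "closed_subspace K \<longleftrightarrow> K \<subseteq> H \<and> (\<lambda>x. 0) \<in> K \<and>
     (\<forall>a. \<forall>u\<in>K. \<forall>v\<in>K. (\<lambda>x. a * u x + v x) \<in> K) \<and>
     (\<forall>u g. (\<forall>n. u n \<in> K) \<and> g \<in> H \<and> (\<lambda>n. hnorm ip (\<lambda>x. u n x - g x)) \<longlonglongrightarrow> 0 \<longrightarrow> g \<in> K)"

lemma closed_subspaceI:
  assumes "K \<subseteq> H" and "(\<lambda>x. 0) \<in> K"
    and "\<And>a u v. u \<in> K \<Longrightarrow> v \<in> K \<Longrightarrow> (\<lambda>x. a * u x + v x) \<in> K"
    and "\<And>u g. (\<And>n. u n \<in> K) \<Longrightarrow> g \<in> H \<Longrightarrow>
      (\<lambda>n. hnorm ip (\<lambda>x. u n x - g x)) \<longlonglongrightarrow> 0 \<Longrightarrow> g \<in> K"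
  shows "closed_subspace K"
  using assms unfolding closed_subspace_def by blast

lemma closed_subspace_subset: "closed_subspace K \<Longrightarrow> K \<subseteq> H"
  unfolding closed_subspace_def by blast

lemma closed_subspace_zero: "closed_subspace K \<Longrightarrow> (\<lambda>x. 0) \<in> K"
  unfolding closed_subspace_def by blast

lemma closed_subspace_lincomb:
  "closed_subspace K \<Longrightarrow> u \<in> K \<Longrightarrow> v \<in> K \<Longrightarrow> (\<lambda>x. a * u x + v x) \<in> K"
  unfolding closed_subspace_def by blast

lemma closed_subspace_scale: "closed_subspace K \<Longrightarrow> u \<in> K \<Longrightarrow> (\<lambda>x. a * u x) \<in> K"
  using closed_subspace_lincomb[OF _ _ closed_subspace_zero, of K u a] by simp

lemma closed_subspace_limit:
  "closed_subspace K \<Longrightarrow> (\<And>n. u n \<in> K) \<Longrightarrow> g \<in> H \<Longrightarrow>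
    (\<lambda>n. hnorm ip (\<lambda>x. u n x - g x)) \<longlonglongrightarrow> 0 \<Longrightarrow> g \<in> K"
  unfolding closed_subspace_def by blast

lemma hnorm_diff_square_le_midpoint:
  assumes u: "u \<in> H" and v: "v \<in> H" and w: "w \<in> H"
    and "hnorm ip (\<lambda>x. w x - u x) \<le> r" and "hnorm ip (\<lambda>x. w x - v x) \<le> r"
    and mid: "d \<le> hnorm ip (\<lambda>x. w x - ((1/2) * u x + (1/2) * v x))" and "0 \<le> d"
  shows "(hnorm ip (\<lambda>x. u x - v x))^2 \<le> 4 * r^2 - 4 * d^2"
proof -
  define a where "a = (\<lambda>x. w x - u x)"
  define b where "b = (\<lambda>x. w x - v x)"
  define m where "m = (\<lambda>x. w x - ((1/2) * u x + (1/2) * v x))"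
  have ab: "a \<in> H" "b \<in> H"
    unfolding a_def b_def using diff_mem w u v by auto
  have "m \<in> H"
    unfolding m_def using diff_mem[OF w lincomb_mem[OF u scale_mem[OF v]]] .
  moreover have "(\<lambda>x. a x + b x) = (\<lambda>x. 2 * m x)"
    unfolding a_def b_def m_def by (auto simp: algebra_simps)
  ultimately have "hnorm ip (\<lambda>x. a x + b x) = 2 * hnorm ip m"
    using hnorm_scale[of m 2] by simp
  hence "4 * d^2 \<le> (hnorm ip (\<lambda>x. a x + b x))^2"
    using power_mono[OF mid \<open>0 \<le> d\<close>, of 2] unfolding m_def by (simp add: power_mult_distrib)
  moreover have "(hnorm ip a)^2 \<le> r^2" "(hnorm ip b)^2 \<le> r^2"
    using assms ab unfolding a_def b_def by (simp_all add: hnorm_nonneg power_mono)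
  moreover have "(\<lambda>x. a x - b x) = (\<lambda>x. v x - u x)"
    unfolding a_def b_def by auto
  hence "(hnorm ip (\<lambda>x. a x - b x))^2 = (hnorm ip (\<lambda>x. u x - v x))^2"
    using hnorm_diff_commute[OF u v] by simp
  ultimately show ?thesis
    using parallelogram_law[OF ab] by linarith
qed

lemma closed_subspace_minimizing_sequence_limit:
  assumes K: "closed_subspace K" and w: "w \<in> H"
    and d_le: "\<And>k. k \<in> K \<Longrightarrow> d \<le> hnorm ip (\<lambda>x. w x - k x)" and "0 \<le> d"
    and kk: "\<And>n. kk n \<in> K" and kk_le: "\<And>n. hnorm ip (\<lambda>x. w x - kk n x) \<le> r n"
    and "decseq r" and r_lim: "r \<longlonglongrightarrow> d"
  shows "\<exists>p\<in>K. hnorm ip (\<lambda>x. w x - p x) \<le> d"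
proof -
  have kkH: "kk n \<in> H" for n using kk closed_subspace_subset[OF K] by blast
  have diam: "(hnorm ip (\<lambda>x. kk m x - kk n x))^2 \<le> 4 * (r N)^2 - 4 * d^2"
    if "N \<le> m" "N \<le> n" for N m n
  proof (rule hnorm_diff_square_le_midpoint[OF kkH kkH w _ _ d_le \<open>0 \<le> d\<close>])
    show "hnorm ip (\<lambda>x. w x - kk m x) \<le> r N" "hnorm ip (\<lambda>x. w x - kk n x) \<le> r N"
      using kk_le decseqD[OF \<open>decseq r\<close>] that by (meson order_trans)+
    show "(\<lambda>x. (1/2) * kk m x + (1/2) * kk n x) \<in> K"
      by (intro closed_subspace_lincomb[OF K] closed_subspace_scale[OF K] kk)
  qed
  have "(\<lambda>N. 4 * (r N)^2 - 4 * d^2) \<longlonglongrightarrow> 4 * d^2 - 4 * d^2"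
    by (intro tendsto_intros r_lim)
  hence "hCauchy kk"
    using diam by (intro hCauchyI_square_le[of kk]) auto
  then obtain p where p: "p \<in> H" and p_lim: "(\<lambda>n. hnorm ip (\<lambda>x. kk n x - p x)) \<longlonglongrightarrow> 0"
    using hCauchy_converges[of kk] kkH by blast
  have "hnorm ip (\<lambda>x. w x - p x) \<le> d"
  proof (rule LIMSEQ_le_const[OF tendsto_add[OF r_lim p_lim, simplified]])
    have "hnorm ip (\<lambda>x. w x - p x) \<le> r n + hnorm ip (\<lambda>x. kk n x - p x)" for n
      using hnorm_triangle_diff[OF w kkH p, of n] kk_le[of n] by linarith
    thus "\<exists>N. \<forall>n\<ge>N. hnorm ip (\<lambda>x. w x - p x) \<le> r n + hnorm ip (\<lambda>x. kk n x - p x)"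
      by blast
  qed
  moreover have "p \<in> K"
    using closed_subspace_limit[OF K, of kk] kk p p_lim by blast
  ultimately show ?thesis by blast
qed

lemma closed_subspace_nearest_point:
  assumes K: "closed_subspace K" and w: "w \<in> H"
  shows "\<exists>p\<in>K. \<forall>k\<in>K. hnorm ip (\<lambda>x. w x - p x) \<le> hnorm ip (\<lambda>x. w x - k x)"
proof -
  have KH: "K \<subseteq> H" by (rule closed_subspace_subset[OF K])
  define d where "d = (INF k\<in>K. hnorm ip (\<lambda>x. w x - k x))"
  have bdd: "bdd_below ((\<lambda>k. hnorm ip (\<lambda>x. w x - k x)) ` K)"
    using KH w by (intro bdd_belowI2[of _ 0]) (auto intro: hnorm_nonneg diff_mem)
  have d_le: "d \<le> hnorm ip (\<lambda>x. w x - k x)" if "k \<in> K" for k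
    unfolding d_def by (rule cINF_lower[OF bdd that])
  have "0 \<le> d"
    unfolding d_def using KH w closed_subspace_zero[OF K]
    by (intro cINF_greatest) (auto intro: hnorm_nonneg diff_mem)
  define r where "r n = d + 1 / Suc n" for n
  have "\<exists>k\<in>K. hnorm ip (\<lambda>x. w x - k x) < r n" for n
    using cINF_less_iff[OF _ bdd, of "r n"] closed_subspace_zero[OF K] unfolding d_def[symmetric]
    by (force simp: r_def)
  then obtain kk where kk: "\<And>n. kk n \<in> K" "\<And>n. hnorm ip (\<lambda>x. w x - kk n x) < r n"
    by metis
  have "decseq r"
    unfolding r_def by (intro decseq_SucI) (simp add: frac_le)
  moreover have "r \<longlonglongrightarrow> d"
    unfolding r_def using LIMSEQ_inverse_real_of_nat_add[of d] by (simp add: inverse_eq_divide)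
  ultimately obtain p where "p \<in> K" "hnorm ip (\<lambda>x. w x - p x) \<le> d"
    using closed_subspace_minimizing_sequence_limit[OF K w d_le \<open>0 \<le> d\<close> kk(1)] kk(2)
    by (meson less_imp_le)
  thus ?thesis
    using d_le by (blast intro: order_trans)
qed

lemma nearest_point_orthogonal:
  assumes K: "closed_subspace K" and w: "w \<in> H" and p: "p \<in> K"
    and nearest: "\<And>q. q \<in> K \<Longrightarrow> hnorm ip (\<lambda>x. w x - p x) \<le> hnorm ip (\<lambda>x. w x - q x)"
    and k: "k \<in> K"
  shows "ip (\<lambda>x. w x - p x) k = 0"
proof -
  define z where "z = (\<lambda>x. w x - p x)"
  have pkH: "p \<in> H" "k \<in> H" using p k closed_subspace_subset[OF K] by auto
  have z: "z \<in> H" unfolding z_def using diff_mem[OF w pkH(1)] .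
  have "(cmod (ip z k))^2 \<le> 0 * (hnorm ip k)^2"
  proof (rule quadratic_nonneg_imp_le)
    fix s :: real
    define q where "q = (\<lambda>x. (of_real s * ip z k) * k x + p x)"
    have "(\<lambda>x. w x - q x) = (\<lambda>x. z x - (of_real s * ip z k) * k x)"
      unfolding q_def z_def by auto
    moreover have "hnorm ip z \<le> hnorm ip (\<lambda>x. w x - q x)"
      unfolding z_def q_def by (intro nearest closed_subspace_lincomb[OF K k p])
    ultimately have "(hnorm ip z)^2 \<le> (hnorm ip (\<lambda>x. z x - (of_real s * ip z k) * k x))^2"
      using hnorm_nonneg[OF z] by (simp add: power_mono)
    thus "0 \<le> 0 - 2*s*(cmod (ip z k))^2 + s^2*(cmod (ip z k))^2*(hnorm ip k)^2"
      unfolding hnorm_diff_real_scale_inner_square[OF z pkH(2)] by simp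
  qed simp_all
  thus ?thesis unfolding z_def by simp
qed

lemma closed_subspace_orthogonal_projection:
  assumes "closed_subspace K" and "w \<in> H"
  shows "\<exists>p\<in>K. \<forall>k\<in>K. ip (\<lambda>x. w x - p x) k = 0"
proof -
  obtain p where "p \<in> K" and "\<forall>q\<in>K. hnorm ip (\<lambda>x. w x - p x) \<le> hnorm ip (\<lambda>x. w x - q x)"
    using closed_subspace_nearest_point[OF assms] by blast
  thus ?thesis
    by (intro bexI[of _ p] ballI nearest_point_orthogonal[OF assms]) auto
qed

lemma closed_subspace_containing_kernels:
  assumes K: "closed_subspace K"
    and kernels: "\<And>k y. k \<in> H \<Longrightarrow> \<forall>f\<in>H. f y = ip f k \<Longrightarrow> k \<in> K"
    and w: "w \<in> H"
  shows "w \<in> K"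
proof -
  obtain p where p: "p \<in> K" and orth: "\<forall>k\<in>K. ip (\<lambda>x. w x - p x) k = 0"
    using closed_subspace_orthogonal_projection[OF K w] by blast
  have "w y - p y = 0" for y
  proof -
    obtain k where k: "k \<in> H" "\<forall>f\<in>H. f y = ip f k"
      using reproducing_kernel by blast
    have "p \<in> H" using p closed_subspace_subset[OF K] by blast
    hence "w y - p y = ip (\<lambda>x. w x - p x) k"
      using k(2) diff_mem[OF w] by simp
    thus ?thesis using orth kernels[OF k] by simp
  qed
  hence "w = p" by (simp add: fun_eq_iff)
  thus ?thesis using p by simp
qed

lemma bounded_functional_kernel:
  assumes lin: "\<And>a u v. u \<in> H \<Longrightarrow> v \<in> H \<Longrightarrow> L (\<lambda>x. a * u x + v x) = a * L u + L v"
    and bounded: "\<And>u. u \<in> H \<Longrightarrow> cmod (L u) \<le> C * hnorm ip u"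
  shows "closed_subspace {u \<in> H. L u = 0}"
proof (rule closed_subspaceI)
  have diff: "L (\<lambda>x. u x - v x) = L u - L v" if "u \<in> H" "v \<in> H" for u v
    using lin[OF that(2,1), of "-1"] by simp
  show "(\<lambda>x. 0) \<in> {u \<in> H. L u = 0}"
    using lin[OF zero_mem zero_mem, of 1] zero_mem by simp
  show "(\<lambda>x. a * u x + v x) \<in> {u \<in> H. L u = 0}"
    if "u \<in> {u \<in> H. L u = 0}" "v \<in> {u \<in> H. L u = 0}" for a u v
    using that lin lincomb_mem by auto
  show "g \<in> {u \<in> H. L u = 0}"
    if u: "\<And>n. u n \<in> {u \<in> H. L u = 0}" and g: "g \<in> H"
      and lim: "(\<lambda>n. hnorm ip (\<lambda>x. u n x - g x)) \<longlonglongrightarrow> 0" for u g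
  proof -
    have "cmod (L g) \<le> C * hnorm ip (\<lambda>x. u n x - g x)" for n
      using bounded[OF diff_mem[of "u n" g]] diff[of "u n" g] u[of n] g by simp
    moreover have "(\<lambda>n. C * hnorm ip (\<lambda>x. u n x - g x)) \<longlonglongrightarrow> 0"
      using tendsto_mult_left[OF lim, of C] by simp
    ultimately have "cmod (L g) \<le> 0"
      by (intro LIMSEQ_le_const) auto
    thus ?thesis using g by simp
  qed
qed blast

lemma riesz_representation:
  assumes lin: "\<And>a u v. u \<in> H \<Longrightarrow> v \<in> H \<Longrightarrow> L (\<lambda>x. a * u x + v x) = a * L u + L v"
    and bounded: "\<And>u. u \<in> H \<Longrightarrow> cmod (L u) \<le> C * hnorm ip u"
  shows "\<exists>g\<in>H. \<forall>u\<in>H. L u = ip u g"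
proof (cases "\<forall>u\<in>H. L u = 0")
  case True
  thus ?thesis using zero_mem inner_zero_right by auto
next
  case False
  then obtain u0 where u0: "u0 \<in> H" "L u0 \<noteq> 0" by blast
  define K where "K = {u \<in> H. L u = 0}"
  have K: "closed_subspace K"
    unfolding K_def using lin bounded by (rule bounded_functional_kernel)
  obtain p where p: "p \<in> K" and orth: "\<forall>k\<in>K. ip (\<lambda>x. u0 x - p x) k = 0"
    using closed_subspace_orthogonal_projection[OF K u0(1)] by blast
  txt \<open>z is a nonzero vector orthogonal to the kernel of L; the representer is a multiple of z.\<close>
  define z where "z = (\<lambda>x. u0 x - p x)"
  have orth_z: "ip z k = 0" if "k \<in> K" for k
    using orth that unfolding z_def by blast
  have "p \<in> H" "L p = 0" using p unfolding K_def by auto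
  hence z: "z \<in> H" and Lz: "L z = L u0"
    unfolding z_def using diff_mem[OF u0(1)] lin[OF \<open>p \<in> H\<close> u0(1), of "-1"] by simp_all
  have zz: "ip z z \<noteq> 0"
    using inner_self_eq_zero_imp[OF z] lin[OF zero_mem zero_mem, of 1] Lz u0(2) by force
  define c where "c = cnj (L z) / cnj (ip z z)"
  show ?thesis
  proof (intro bexI[of _ "\<lambda>x. c * z x"] ballI)
    fix u assume u: "u \<in> H"
    define v where "v = (\<lambda>x. (- (L u / L z)) * z x + u x)"
    have "L v = (- (L u / L z)) * L z + L u"
      unfolding v_def by (rule lin[OF z u])
    moreover have v: "v \<in> H"
      unfolding v_def by (rule lincomb_mem[OF z u])
    ultimately have "v \<in> K"
      unfolding K_def using Lz u0(2) by simp
    hence "ip v z = 0"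
      using orth_z inner_commute[OF v z] by simp
    hence "ip u z = (L u / L z) * ip z z"
      unfolding v_def inner_lincomb_left[OF z u z] by (simp add: algebra_simps)
    moreover have "ip u (\<lambda>x. c * z x) = cnj c * ip u z"
      by (rule inner_scale_right[OF z u])
    ultimately show "L u = ip u (\<lambda>x. c * z x)"
      using zz Lz u0(2) unfolding c_def by simp
  qed (rule scale_mem[OF z])
qed

section \<open>Adjoints of multipliers\<close>

lemma multiplier_mem: "multiplier H ip \<psi> \<Longrightarrow> u \<in> H \<Longrightarrow> mult \<psi> u \<in> H"
  unfolding multiplier_def by blast

lemma multiplier_bound:
  assumes "multiplier H ip \<psi>"
  obtains C where "0 \<le> C" and "\<And>u. u \<in> H \<Longrightarrow> hnorm ip (mult \<psi> u) \<le> C * hnorm ip u"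
proof -
  obtain C where C: "\<forall>u\<in>H. hnorm ip (mult \<psi> u) \<le> C * hnorm ip u"
    using assms unfolding multiplier_def by blast
  have "hnorm ip (mult \<psi> u) \<le> max C 0 * hnorm ip u" if "u \<in> H" for u
  proof -
    have "C * hnorm ip u \<le> max C 0 * hnorm ip u"
      by (rule mult_right_mono[OF max.cobounded1 hnorm_nonneg[OF that]])
    thus ?thesis using C that by force
  qed
  thus ?thesis using that[of "max C 0"] by simp
qed

lemma mult_adj_exists:
  assumes \<psi>: "multiplier H ip \<psi>" and h: "h \<in> H"
  shows "\<exists>g\<in>H. \<forall>u\<in>H. ip (mult \<psi> u) h = ip u g"
proof -
  obtain C where C: "0 \<le> C" "\<And>u. u \<in> H \<Longrightarrow> hnorm ip (mult \<psi> u) \<le> C * hnorm ip u"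
    using multiplier_bound[OF \<psi>] by blast
  show ?thesis
  proof (rule riesz_representation[where C = "C * hnorm ip h"])
    show "ip (mult \<psi> (\<lambda>x. a * u x + v x)) h = a * ip (mult \<psi> u) h + ip (mult \<psi> v) h"
      if "u \<in> H" "v \<in> H" for a u v
      unfolding mult_lincomb using inner_lincomb_left multiplier_mem[OF \<psi>] that h by simp
    show "cmod (ip (mult \<psi> u) h) \<le> (C * hnorm ip h) * hnorm ip u" if u: "u \<in> H" for u
    proof -
      have "cmod (ip (mult \<psi> u) h) \<le> hnorm ip (mult \<psi> u) * hnorm ip h"
        by (rule cmod_inner_le[OF multiplier_mem[OF \<psi> u] h])
      also have "\<dots> \<le> C * hnorm ip u * hnorm ip h"
        using C(2)[OF u] hnorm_nonneg[OF h] by (rule mult_right_mono)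
      finally show ?thesis by (simp add: algebra_simps)
    qed
  qed
qed

lemma inner_right_eq_imp_eq:
  assumes "g1 \<in> H" "g2 \<in> H" and "\<And>u. u \<in> H \<Longrightarrow> ip u g1 = ip u g2"
  shows "g1 = g2"
proof -
  have "ip (\<lambda>x. g1 x - g2 x) (\<lambda>x. g1 x - g2 x) = 0"
    using assms diff_mem inner_diff_right by simp
  hence "(\<lambda>x. g1 x - g2 x) = (\<lambda>x. 0)"
    by (rule inner_self_eq_zero_imp[OF diff_mem[OF assms(1,2)]])
  thus ?thesis by (simp add: fun_eq_iff)
qed

lemma mult_adj:
  assumes "multiplier H ip \<psi>" and "h \<in> H"
  shows "mult_adj H ip \<psi> h \<in> H \<and> (\<forall>u\<in>H. ip (mult \<psi> u) h = ip u (mult_adj H ip \<psi> h))"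
proof -
  have "\<exists>!g. g \<in> H \<and> (\<forall>u\<in>H. ip (mult \<psi> u) h = ip u g)"
  proof (rule ex_ex1I)
    show "\<exists>g. g \<in> H \<and> (\<forall>u\<in>H. ip (mult \<psi> u) h = ip u g)"
      using mult_adj_exists[OF assms] by blast
    show "g1 = g2"
      if "g1 \<in> H \<and> (\<forall>u\<in>H. ip (mult \<psi> u) h = ip u g1)"
        and "g2 \<in> H \<and> (\<forall>u\<in>H. ip (mult \<psi> u) h = ip u g2)" for g1 g2
      using that by (intro inner_right_eq_imp_eq) auto
  qed
  thus ?thesis unfolding mult_adj_def by (rule theI')
qed

lemma mult_adj_mem: "multiplier H ip \<psi> \<Longrightarrow> h \<in> H \<Longrightarrow> mult_adj H ip \<psi> h \<in> H"
  using mult_adj by blast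

lemma inner_mult_adj:
  "multiplier H ip \<psi> \<Longrightarrow> h \<in> H \<Longrightarrow> u \<in> H \<Longrightarrow> ip (mult \<psi> u) h = ip u (mult_adj H ip \<psi> h)"
  using mult_adj by blast

lemma mult_adj_eqI:
  assumes "multiplier H ip \<psi>" and "h \<in> H" and "g \<in> H"
    and "\<And>u. u \<in> H \<Longrightarrow> ip (mult \<psi> u) h = ip u g"
  shows "mult_adj H ip \<psi> h = g"
  by (rule inner_right_eq_imp_eq[OF mult_adj_mem[OF assms(1,2)] assms(3)])
    (simp add: inner_mult_adj[OF assms(1,2), symmetric] assms(4))

lemma multiplier_mult:
  assumes a: "multiplier H ip a" and b: "multiplier H ip b"
  shows "multiplier H ip (\<lambda>x. a x * b x)"
proof -
  obtain A where A: "0 \<le> A" "\<And>u. u \<in> H \<Longrightarrow> hnorm ip (mult a u) \<le> A * hnorm ip u"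
    using multiplier_bound[OF a] by blast
  obtain B where B: "\<And>u. u \<in> H \<Longrightarrow> hnorm ip (mult b u) \<le> B * hnorm ip u"
    using multiplier_bound[OF b] by blast
  have "hnorm ip (mult (\<lambda>x. a x * b x) u) \<le> (A * B) * hnorm ip u" if u: "u \<in> H" for u
  proof -
    have "hnorm ip (mult a (mult b u)) \<le> A * hnorm ip (mult b u)"
      by (rule A(2)[OF multiplier_mem[OF b u]])
    also have "\<dots> \<le> A * (B * hnorm ip u)"
      by (rule mult_left_mono[OF B[OF u] A(1)])
    finally show ?thesis by (simp add: mult_mult mult.assoc)
  qed
  thus ?thesis
    unfolding multiplier_def using multiplier_mem a b by (auto simp flip: mult_mult)
qed

lemma mult_ball_multiplier: "mult_ball H ip \<psi> \<Longrightarrow> multiplier H ip \<psi>"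
  unfolding mult_ball_def by blast

lemma mult_ball_hnorm_le: "mult_ball H ip \<psi> \<Longrightarrow> u \<in> H \<Longrightarrow> hnorm ip (mult \<psi> u) \<le> hnorm ip u"
  unfolding mult_ball_def by blast

lemma mult_ball_one: "mult_ball H ip (\<lambda>x. 1)"
  unfolding mult_ball_def multiplier_def mult_one by (auto intro: exI[of _ 1])

lemma mult_ball_mult:
  assumes a: "mult_ball H ip a" and b: "mult_ball H ip b"
  shows "mult_ball H ip (\<lambda>x. a x * b x)"
  unfolding mult_ball_def mult_mult[symmetric]
  using multiplier_mult[OF mult_ball_multiplier[OF a] mult_ball_multiplier[OF b]]
    mult_ball_hnorm_le[OF a multiplier_mem[OF mult_ball_multiplier[OF b]]] mult_ball_hnorm_le[OF b]
  by (force simp: mult_mult)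

lemma mult_adj_one: "h \<in> H \<Longrightarrow> mult_adj H ip (\<lambda>x. 1) h = h"
  by (rule mult_adj_eqI[OF mult_ball_multiplier[OF mult_ball_one]]) (simp_all add: mult_one)

lemma mult_adj_mult:
  assumes a: "multiplier H ip a" and b: "multiplier H ip b" and h: "h \<in> H"
  shows "mult_adj H ip (\<lambda>x. a x * b x) h = mult_adj H ip b (mult_adj H ip a h)"
proof (rule mult_adj_eqI[OF multiplier_mult[OF a b] h mult_adj_mem[OF b mult_adj_mem[OF a h]]])
  fix u assume u: "u \<in> H"
  have "ip (mult (\<lambda>x. a x * b x) u) h = ip (mult a (mult b u)) h"
    by (simp add: mult_mult)
  also have "\<dots> = ip (mult b u) (mult_adj H ip a h)"
    by (rule inner_mult_adj[OF a h multiplier_mem[OF b u]])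
  also have "\<dots> = ip u (mult_adj H ip b (mult_adj H ip a h))"
    by (rule inner_mult_adj[OF b mult_adj_mem[OF a h] u])
  finally show "ip (mult (\<lambda>x. a x * b x) u) h = ip u (mult_adj H ip b (mult_adj H ip a h))" .
qed

lemma hnorm_Qop_square_le:
  assumes \<psi>: "mult_ball H ip \<psi>" and h: "h \<in> H"
  shows "(hnorm ip (Qop H ip \<psi> h))^2 \<le> (hnorm ip h)^2 - (hnorm ip (mult_adj H ip \<psi> h))^2"
proof -
  define g where "g = mult_adj H ip \<psi> h"
  have \<psi>': "multiplier H ip \<psi>" by (rule mult_ball_multiplier[OF \<psi>])
  have g: "g \<in> H" unfolding g_def by (rule mult_adj_mem[OF \<psi>' h])
  have \<psi>g: "mult \<psi> g \<in> H" by (rule multiplier_mem[OF \<psi>' g])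
  have "Re (ip h (mult \<psi> g)) = Re (ip (mult \<psi> g) h)"
    using inner_commute[OF h \<psi>g] by simp
  also have "\<dots> = (hnorm ip g)^2"
    unfolding g_def inner_mult_adj[OF \<psi>' h g[unfolded g_def]] hnorm_square[OF g[unfolded g_def]] ..
  finally have "(hnorm ip (Qop H ip \<psi> h))^2 = (hnorm ip h)^2 - 2 * (hnorm ip g)^2 + (hnorm ip (mult \<psi> g))^2"
    unfolding Qop_def g_def[symmetric] hnorm_diff_square[OF h \<psi>g] by simp
  moreover have "(hnorm ip (mult \<psi> g))^2 \<le> (hnorm ip g)^2"
    using mult_ball_hnorm_le[OF \<psi> g] hnorm_nonneg[OF \<psi>g] by (simp add: power_mono)
  ultimately show ?thesis unfolding g_def by simp
qed

definition Pop :: "('x \<Rightarrow> complex) \<Rightarrow> ('x \<Rightarrow> complex) \<Rightarrow> ('x \<Rightarrow> complex)" where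
  "Pop \<psi> h = mult \<psi> (mult_adj H ip \<psi> h)"

text \<open>The difference is M_a Q_b M_a^* h, and M_a is a contraction.\<close>
lemma hnorm_Pop_diff_square_le:
  assumes a: "mult_ball H ip a" and b: "mult_ball H ip b" and h: "h \<in> H"
  shows "(hnorm ip (\<lambda>x. Pop a h x - Pop (\<lambda>x. a x * b x) h x))^2
    \<le> (hnorm ip (mult_adj H ip a h))^2 - (hnorm ip (mult_adj H ip (\<lambda>x. a x * b x) h))^2"
proof -
  define g where "g = mult_adj H ip a h"
  have a': "multiplier H ip a" and b': "multiplier H ip b"
    using a b by (simp_all add: mult_ball_multiplier)
  have g: "g \<in> H" unfolding g_def by (rule mult_adj_mem[OF a' h])
  have Q: "Qop H ip b g \<in> H"
    unfolding Qop_def by (rule diff_mem[OF g multiplier_mem[OF b' mult_adj_mem[OF b' g]]])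
  have adj_ab: "mult_adj H ip (\<lambda>x. a x * b x) h = mult_adj H ip b g"
    unfolding g_def by (rule mult_adj_mult[OF a' b' h])
  have diff: "(\<lambda>x. Pop a h x - Pop (\<lambda>x. a x * b x) h x) = mult a (Qop H ip b g)"
    unfolding Pop_def adj_ab g_def[symmetric] Qop_def by (simp add: mult_def algebra_simps)
  have "hnorm ip (mult a (Qop H ip b g)) \<le> hnorm ip (Qop H ip b g)"
    by (rule mult_ball_hnorm_le[OF a Q])
  hence "(hnorm ip (\<lambda>x. Pop a h x - Pop (\<lambda>x. a x * b x) h x))^2 \<le> (hnorm ip (Qop H ip b g))^2"
    unfolding diff using hnorm_nonneg[OF multiplier_mem[OF a' Q]] by (rule power_mono)
  also have "\<dots> \<le> (hnorm ip g)^2 - (hnorm ip (mult_adj H ip b g))^2"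
    by (rule hnorm_Qop_square_le[OF b g])
  finally show ?thesis unfolding adj_ab g_def .
qed

section \<open>Weak convergence of contractive multipliers\<close>

lemma cmod_inner_diff_le:
  assumes X: "X \<in> H" and Y: "Y \<in> H" and v: "v \<in> H" and g: "g \<in> H"
  shows "cmod (ip X g - ip Y g)
    \<le> cmod (ip X v - ip Y v) + (hnorm ip X + hnorm ip Y) * hnorm ip (\<lambda>x. v x - g x)"
proof -
  define e where "e = (\<lambda>x. v x - g x)"
  have e: "e \<in> H" unfolding e_def by (rule diff_mem[OF v g])
  have "ip X g - ip Y g = (ip X v - ip Y v) - ip X e + ip Y e"
    unfolding e_def using inner_diff_right[OF v g X] inner_diff_right[OF v g Y] by simp
  hence "cmod (ip X g - ip Y g) \<le> cmod (ip X v - ip Y v) + cmod (ip X e) + cmod (ip Y e)"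
    using norm_triangle_ineq[of "(ip X v - ip Y v) - ip X e" "ip Y e"]
      norm_triangle_ineq4[of "ip X v - ip Y v" "ip X e"] by simp
  also have "\<dots> \<le> cmod (ip X v - ip Y v) + hnorm ip X * hnorm ip e + hnorm ip Y * hnorm ip e"
    using cmod_inner_le[OF X e] cmod_inner_le[OF Y e] by simp
  finally show ?thesis unfolding e_def[symmetric] by (simp add: algebra_simps)
qed

lemma inner_tendsto_of_approx:
  assumes X: "\<And>N. X N \<in> H" and bounded: "\<And>N. hnorm ip (X N) \<le> B" and Y: "Y \<in> H"
    and v: "\<And>n. v n \<in> H" and g: "g \<in> H" and lim: "(\<lambda>n. hnorm ip (\<lambda>x. v n x - g x)) \<longlonglongrightarrow> 0"
    and v_tendsto: "\<And>n. (\<lambda>N. ip (X N) (v n)) \<longlonglongrightarrow> ip Y (v n)"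
  shows "(\<lambda>N. ip (X N) g) \<longlonglongrightarrow> ip Y g"
  unfolding LIMSEQ_iff
proof (intro allI impI)
  fix r :: real assume "r > 0"
  define C where "C = B + hnorm ip Y + 1"
  have "(\<lambda>n. C * hnorm ip (\<lambda>x. v n x - g x)) \<longlonglongrightarrow> 0"
    using tendsto_mult_left[OF lim, of C] by simp
  then obtain m where m: "C * hnorm ip (\<lambda>x. v m x - g x) < r / 2"
    using order_tendstoD(2)[of _ 0 sequentially "r / 2"] \<open>r > 0\<close>
    by (auto simp: eventually_sequentially)
  obtain N0 where N0: "\<forall>N\<ge>N0. cmod (ip (X N) (v m) - ip Y (v m)) < r / 2"
    using v_tendsto[of m] \<open>r > 0\<close> unfolding LIMSEQ_iff by (meson half_gt_zero)
  have "cmod (ip (X N) g - ip Y g) < r" if "N0 \<le> N" for N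
  proof -
    have "(hnorm ip (X N) + hnorm ip Y) * hnorm ip (\<lambda>x. v m x - g x)
        \<le> C * hnorm ip (\<lambda>x. v m x - g x)"
      unfolding C_def using bounded[of N] hnorm_nonneg[OF diff_mem[OF v g]]
      by (intro mult_right_mono) auto
    thus ?thesis
      using cmod_inner_diff_le[OF X Y v g, of N m] N0[rule_format, OF that] m by linarith
  qed
  thus "\<exists>N0. \<forall>N\<ge>N0. norm (ip (X N) g - ip Y g) < r" by blast
qed

lemma inner_tendsto_closed_subspace:
  assumes X: "\<And>N. X N \<in> H" and bounded: "\<And>N. hnorm ip (X N) \<le> B" and Y: "Y \<in> H"
  shows "closed_subspace {w \<in> H. (\<lambda>N. ip (X N) w) \<longlonglongrightarrow> ip Y w}"
proof (rule closed_subspaceI)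
  show "(\<lambda>x. 0) \<in> {w \<in> H. (\<lambda>N. ip (X N) w) \<longlonglongrightarrow> ip Y w}"
    using zero_mem inner_zero_right[OF X] inner_zero_right[OF Y] by simp
  show "(\<lambda>x. a * u x + v x) \<in> {w \<in> H. (\<lambda>N. ip (X N) w) \<longlonglongrightarrow> ip Y w}"
    if "u \<in> {w \<in> H. (\<lambda>N. ip (X N) w) \<longlonglongrightarrow> ip Y w}"
      and "v \<in> {w \<in> H. (\<lambda>N. ip (X N) w) \<longlonglongrightarrow> ip Y w}" for a u v
    using that lincomb_mem inner_lincomb_right[OF _ _ X] inner_lincomb_right[OF _ _ Y]
    by (auto intro!: tendsto_intros)
  show "g \<in> {w \<in> H. (\<lambda>N. ip (X N) w) \<longlonglongrightarrow> ip Y w}"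
    if "\<And>n. v n \<in> {w \<in> H. (\<lambda>N. ip (X N) w) \<longlonglongrightarrow> ip Y w}" and "g \<in> H"
      and "(\<lambda>n. hnorm ip (\<lambda>x. v n x - g x)) \<longlonglongrightarrow> 0" for v g
    using that inner_tendsto_of_approx[of X B Y v g] X bounded Y by blast
qed blast

lemma mult_tendsto_weakly:
  assumes \<Psi>: "\<And>N. mult_ball H ip (\<Psi> N)" and \<Phi>: "multiplier H ip \<Phi>"
    and pointwise: "\<And>x. (\<lambda>N. \<Psi> N x) \<longlonglongrightarrow> \<Phi> x" and u: "u \<in> H" and w: "w \<in> H"
  shows "(\<lambda>N. ip (mult (\<Psi> N) u) w) \<longlonglongrightarrow> ip (mult \<Phi> u) w"
proof -
  define D where "D = {w \<in> H. (\<lambda>N. ip (mult (\<Psi> N) u) w) \<longlonglongrightarrow> ip (mult \<Phi> u) w}"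
  have "closed_subspace D"
    unfolding D_def
    using multiplier_mem[OF mult_ball_multiplier[OF \<Psi>] u] mult_ball_hnorm_le[OF \<Psi> u]
      multiplier_mem[OF \<Phi> u]
    by (rule inner_tendsto_closed_subspace)
  moreover have "k \<in> D" if k: "k \<in> H" "\<forall>f\<in>H. f y = ip f k" for k y
  proof -
    have "ip (mult (\<Psi> N) u) k = \<Psi> N y * u y" for N
      using k(2) multiplier_mem[OF mult_ball_multiplier[OF \<Psi>] u] by (simp add: mult_def)
    moreover have "ip (mult \<Phi> u) k = \<Phi> y * u y"
      using k(2) multiplier_mem[OF \<Phi> u] by (simp add: mult_def)
    ultimately show ?thesis
      unfolding D_def using k(1) by (simp add: tendsto_mult_right pointwise)
  qed
  ultimately have "w \<in> D"
    using w by (rule closed_subspace_containing_kernels)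
  thus ?thesis unfolding D_def by blast
qed

lemma mult_adj_tendsto_pointwise:
  assumes \<Psi>: "\<And>N. mult_ball H ip (\<Psi> N)" and \<Phi>: "multiplier H ip \<Phi>"
    and pointwise: "\<And>x. (\<lambda>N. \<Psi> N x) \<longlonglongrightarrow> \<Phi> x" and f: "f \<in> H"
  shows "(\<lambda>N. mult_adj H ip (\<Psi> N) f y) \<longlonglongrightarrow> mult_adj H ip \<Phi> f y"
proof -
  obtain k where k: "k \<in> H" "\<forall>g\<in>H. g y = ip g k"
    using reproducing_kernel by blast
  have eval: "mult_adj H ip \<psi> f y = cnj (ip (mult \<psi> k) f)" if \<psi>: "multiplier H ip \<psi>" for \<psi>
    using k mult_adj_mem[OF \<psi> f] inner_commute[OF k(1)] inner_mult_adj[OF \<psi> f k(1)] by simp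
  show ?thesis
    unfolding eval[OF \<Phi>] eval[OF mult_ball_multiplier[OF \<Psi>]]
    by (intro tendsto_cnj mult_tendsto_weakly[OF \<Psi> \<Phi> pointwise k(1) f])
qed

lemma Pop_tendsto_pointwise:
  assumes \<Psi>: "\<And>N. mult_ball H ip (\<Psi> N)" and \<Phi>: "multiplier H ip \<Phi>"
    and pointwise: "\<And>x. (\<lambda>N. \<Psi> N x) \<longlonglongrightarrow> \<Phi> x" and f: "f \<in> H"
  shows "(\<lambda>N. Pop (\<Psi> N) f y) \<longlonglongrightarrow> Pop \<Phi> f y"
  unfolding Pop_def mult_def
  by (intro tendsto_mult pointwise mult_adj_tendsto_pointwise[OF assms])

end

section \<open>Convergence of the series\<close>

definition segment_prod :: "(nat \<Rightarrow> 'x \<Rightarrow> complex) \<Rightarrow> nat \<Rightarrow> nat \<Rightarrow> 'x \<Rightarrow> complex" where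
  "segment_prod \<phi> m n = (\<lambda>x. \<Prod>i\<in>{Suc m..n}. \<phi> i x)"

lemma partial_prod_eq_segment_prod: "partial_prod \<phi> n = segment_prod \<phi> 0 n"
  unfolding partial_prod_def segment_prod_def by simp

lemma partial_prod_0: "partial_prod \<phi> 0 = (\<lambda>x. 1)"
  unfolding partial_prod_def by simp

lemma partial_prod_mult_segment_prod:
  assumes "m \<le> n"
  shows "(\<lambda>x. partial_prod \<phi> m x * segment_prod \<phi> m n x) = partial_prod \<phi> n"
proof -
  have "{1..m} \<union> {Suc m..n} = {1..n}" "{1..m} \<inter> {Suc m..n} = {}"
    using assms by auto
  thus ?thesis
    unfolding partial_prod_def segment_prod_def
    by (simp add: prod.union_disjoint[symmetric])
qed

lemma segment_prod_pred: "1 \<le> n \<Longrightarrow> segment_prod \<phi> (n - 1) n = \<phi> n"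
  unfolding segment_prod_def by (simp add: fun_eq_iff)

context rkhs_space
begin

lemma mult_ball_segment_prod:
  assumes \<phi>: "\<And>n. 1 \<le> n \<Longrightarrow> mult_ball H ip (\<phi> n)"
  shows "mult_ball H ip (segment_prod \<phi> m n)"
proof (induction n)
  case 0
  show ?case unfolding segment_prod_def using mult_ball_one by simp
next
  case (Suc n)
  show ?case
  proof (cases "m \<le> n")
    case True
    hence "segment_prod \<phi> m (Suc n) = (\<lambda>x. segment_prod \<phi> m n x * \<phi> (Suc n) x)"
      unfolding segment_prod_def by (simp add: fun_eq_iff)
    thus ?thesis using mult_ball_mult[OF Suc.IH \<phi>] by simp
  next
    case False
    hence "segment_prod \<phi> m (Suc n) = (\<lambda>x. 1)"
      unfolding segment_prod_def by simp
    thus ?thesis using mult_ball_one by simp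
  qed
qed

lemma mult_ball_partial_prod:
  "(\<And>n. 1 \<le> n \<Longrightarrow> mult_ball H ip (\<phi> n)) \<Longrightarrow> mult_ball H ip (partial_prod \<phi> n)"
  unfolding partial_prod_eq_segment_prod by (rule mult_ball_segment_prod)

lemma Pop_partial_prod_tendsto:
  assumes \<phi>: "\<And>n. 1 \<le> n \<Longrightarrow> mult_ball H ip (\<phi> n)" and \<Phi>: "multiplier H ip \<Phi>"
    and pointwise: "\<And>x. (\<lambda>n. partial_prod \<phi> n x) \<longlonglongrightarrow> \<Phi> x" and f: "f \<in> H"
  shows "(\<lambda>N. hnorm ip (\<lambda>x. Pop (partial_prod \<phi> N) f x - Pop \<Phi> f x)) \<longlonglongrightarrow> 0"
proof -
  define R where "R N = Pop (partial_prod \<phi> N) f" for N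
  have P: "mult_ball H ip (partial_prod \<phi> n)" for n
    by (rule mult_ball_partial_prod[OF \<phi>])
  have R: "R N \<in> H" for N
    unfolding R_def Pop_def using mult_ball_multiplier[OF P]
    by (intro multiplier_mem mult_adj_mem f)
  have "hCauchy R"
  proof (rule hCauchy_of_square_le_diff[OF R])
    show "(hnorm ip (\<lambda>x. R m x - R n x))^2
      \<le> (hnorm ip (mult_adj H ip (partial_prod \<phi> m) f))^2
        - (hnorm ip (mult_adj H ip (partial_prod \<phi> n) f))^2" if "m \<le> n" for m n
      using hnorm_Pop_diff_square_le[OF P[of m] mult_ball_segment_prod[of \<phi> m n, OF \<phi>] f]
      unfolding R_def partial_prod_mult_segment_prod[OF that] .
  qed simp
  then obtain h where h: "h \<in> H" and lim: "(\<lambda>N. hnorm ip (\<lambda>x. R N x - h x)) \<longlonglongrightarrow> 0"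
    using hCauchy_converges[of R] R by blast
  have "h = Pop \<Phi> f"
  proof
    fix y
    have "(\<lambda>N. R N y) \<longlonglongrightarrow> Pop \<Phi> f y"
      unfolding R_def by (rule Pop_tendsto_pointwise[OF P \<Phi> pointwise f])
    thus "h y = Pop \<Phi> f y"
      by (rule LIMSEQ_unique[OF hnorm_tendsto_imp_pointwise[OF R h lim]])
  qed
  thus ?thesis using lim unfolding R_def by simp
qed

lemma sum_series_terms:
  assumes \<phi>: "\<And>n. 1 \<le> n \<Longrightarrow> mult_ball H ip (\<phi> n)" and f: "f \<in> H"
  shows "(\<Sum>n\<in>{1..N}. mult (partial_prod \<phi> (n - 1))
      (Qop H ip (\<phi> n) (mult_adj H ip (partial_prod \<phi> (n - 1)) f)) x)
    = f x - Pop (partial_prod \<phi> N) f x"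
proof -
  have P: "multiplier H ip (partial_prod \<phi> n)" for n
    by (rule mult_ball_multiplier[OF mult_ball_partial_prod[OF \<phi>]])
  have series_term: "mult (partial_prod \<phi> (n - 1))
      (Qop H ip (\<phi> n) (mult_adj H ip (partial_prod \<phi> (n - 1)) f)) x
    = Pop (partial_prod \<phi> (n - 1)) f x - Pop (partial_prod \<phi> n) f x" if n: "1 \<le> n" for n
  proof -
    have split: "partial_prod \<phi> n = (\<lambda>x. partial_prod \<phi> (n - 1) x * \<phi> n x)"
      using partial_prod_mult_segment_prod[of "n - 1" n \<phi>] segment_prod_pred[OF n, of \<phi>] by simp
    have "mult_adj H ip (partial_prod \<phi> n) f
        = mult_adj H ip (\<phi> n) (mult_adj H ip (partial_prod \<phi> (n - 1)) f)"
      unfolding split by (rule mult_adj_mult[OF P mult_ball_multiplier[OF \<phi>[OF n]] f])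
    thus ?thesis
      unfolding Qop_def Pop_def by (subst split) (simp add: mult_def algebra_simps)
  qed
  have "(\<Sum>n\<in>{1..N}. mult (partial_prod \<phi> (n - 1))
      (Qop H ip (\<phi> n) (mult_adj H ip (partial_prod \<phi> (n - 1)) f)) x)
    = (\<Sum>n\<in>{Suc 0..N}. Pop (partial_prod \<phi> (n - 1)) f x - Pop (partial_prod \<phi> n) f x)"
    using series_term by (intro sum.cong) auto
  also have "\<dots> = Pop (partial_prod \<phi> 0) f x - Pop (partial_prod \<phi> N) f x"
    using sum_telescope''[of 0 N "\<lambda>n. - Pop (partial_prod \<phi> n) f x"] by simp
  also have "Pop (partial_prod \<phi> 0) f = f"
    unfolding partial_prod_0 Pop_def mult_adj_one[OF f] mult_one ..
  finally show ?thesis .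
qed

end

theorem theorem2p2:
  fixes H :: "('x \<Rightarrow> complex) set"
    and ip :: "('x \<Rightarrow> complex) \<Rightarrow> ('x \<Rightarrow> complex) \<Rightarrow> complex"
    and \<phi> :: "nat \<Rightarrow> 'x \<Rightarrow> complex"
    and \<Phi> :: "'x \<Rightarrow> complex"
    and f :: "'x \<Rightarrow> complex"
  assumes "rkhs H ip"
    and "\<And>n. n \<ge> 1 \<Longrightarrow> mult_ball H ip (\<phi> n)"
    and "multiplier H ip \<Phi>"
    and "\<And>x. (\<lambda>n. partial_prod \<phi> n x) \<longlonglongrightarrow> \<Phi> x"
    and "f \<in> H"
  shows "(\<lambda>N. hnorm ip (\<lambda>x. f x - (mult \<Phi> (mult_adj H ip \<Phi> f) x
            + (\<Sum>n\<in>{1..N}. mult (partial_prod \<phi> (n - 1))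
                 (Qop H ip (\<phi> n) (mult_adj H ip (partial_prod \<phi> (n - 1)) f)) x))))
         \<longlonglongrightarrow> 0"
proof -
  interpret rkhs_space H ip
    by (rule rkhs_space.intro) (rule assms(1))
  have "(\<lambda>x. f x - (mult \<Phi> (mult_adj H ip \<Phi> f) x
            + (\<Sum>n\<in>{1..N}. mult (partial_prod \<phi> (n - 1))
                 (Qop H ip (\<phi> n) (mult_adj H ip (partial_prod \<phi> (n - 1)) f)) x)))
      = (\<lambda>x. Pop (partial_prod \<phi> N) f x - Pop \<Phi> f x)" for N
    using sum_series_terms[OF assms(2,5)] by (simp add: Pop_def fun_eq_iff)
  thus ?thesis
    using Pop_partial_prod_tendsto[OF assms(2-5)] by simp
qed

end
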